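(* Let $G$ be a finite group acting linearly, isometrically and effectively on $M=\mathbb{R}^n$. Let $X$ be a random variable in $\mathbb{R}^n$ whose law is absolutely continuous with respect to Lebesgue measure, with $\mathbb{E}(\|X\|^2)<+\infty$, and assume that $t_0=\mathbb{E}(X)$ is a regular point. If $$\mathbb{P}\big(X\notin \mathrm{Cone}(t_0)\big)>0,$$ then $[t_0]$ is not a Fréchet mean of $[X]$.
   Context: $\mathbb{R}^n$ carries the Euclidean inner product $\langle\cdot,\cdot\rangle$ and norm $\|\cdot\|$. A group $G$ acts on $M$ via $(g,m)\mapsto g\cdot m$ with $(gg')\cdot m=g\cdot(g'\cdot m)$ and $e_G\cdot m=m$; the action is linear and isometric if each $x\mapsto g\cdot x$ is linear with $\|g\cdot x\|=\|x\|$, and effective if $x\mapsto g\cdot x$ is the identity map only for $g=e_G$. The orbit of $m$ is $[m]=\{g\cdot m: g\in G\}$ and the quotient distance is $d_Q([a],[b])=\inf_{g\in G}\|g\cdot a-b\|$. A point $m$ is regular if $\{g\in G: g\cdot m=m\}=\{e_G\}$. For a regular $m$, $\mathrm{Cone}(m)=\{x\in\mathbb{R}^n: \|x-m\|\le\|x-g\cdot m\| \text{ for all } g\in G\}$. The variance of $[X]$ is $F(m)=\mathbb{E}\big(\min_{g\in G}\|g\cdot X-m\|^2\big)=\mathbb{E}(d_Q([m],[X])^2)$ for $m\in M$; an orbit $[m_\star]$ is a Fréchet mean of $[X]$ if $m_\star$ is a global minimiser of $F$. *)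

theory Defs
  imports "HOL-Probability.Probability" "HOL-Algebra.Group"
begin

definition lin_iso_eff_action :: "('g, 'b) monoid_scheme \<Rightarrow> ('g \<Rightarrow> 'a::euclidean_space \<Rightarrow> 'a) \<Rightarrow> bool" where
  "lin_iso_eff_action G act \<longleftrightarrow>
     (\<forall>g\<in>carrier G. \<forall>h\<in>carrier G. \<forall>x. act (g \<otimes>\<^bsub>G\<^esub> h) x = act g (act h x)) \<and>
     (\<forall>x. act \<one>\<^bsub>G\<^esub> x = x) \<and>
     (\<forall>g\<in>carrier G. linear (act g)) \<and>
     (\<forall>g\<in>carrier G. \<forall>x. norm (act g x) = norm x) \<and>
     (\<forall>g\<in>carrier G. (\<forall>x. act g x = x) \<longrightarrow> g = \<one>\<^bsub>G\<^esub>)"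

definition regular_point :: "('g, 'b) monoid_scheme \<Rightarrow> ('g \<Rightarrow> 'a \<Rightarrow> 'a) \<Rightarrow> 'a \<Rightarrow> bool" where
  "regular_point G act m \<longleftrightarrow> {g \<in> carrier G. act g m = m} = {\<one>\<^bsub>G\<^esub>}"

definition Cone :: "('g, 'b) monoid_scheme \<Rightarrow> ('g \<Rightarrow> 'a::real_normed_vector \<Rightarrow> 'a) \<Rightarrow> 'a \<Rightarrow> 'a set" where
  "Cone G act m = {x. \<forall>g\<in>carrier G. norm (x - m) \<le> norm (x - act g m)}"

definition orbit_variance :: "'w measure \<Rightarrow> ('g, 'b) monoid_scheme \<Rightarrow> ('g \<Rightarrow> 'a::euclidean_space \<Rightarrow> 'a)
    \<Rightarrow> ('w \<Rightarrow> 'a) \<Rightarrow> 'a \<Rightarrow> real" where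
  "orbit_variance M G act X m =
     (\<integral>w. Min ((\<lambda>g. (norm (act g (X w) - m))\<^sup>2) ` carrier G) \<partial>M)"

definition is_frechet_mean :: "'w measure \<Rightarrow> ('g, 'b) monoid_scheme \<Rightarrow> ('g \<Rightarrow> 'a::euclidean_space \<Rightarrow> 'a)
    \<Rightarrow> ('w \<Rightarrow> 'a) \<Rightarrow> 'a \<Rightarrow> bool" where
  "is_frechet_mean M G act X m \<longleftrightarrow> (\<forall>m'. orbit_variance M G act X m \<le> orbit_variance M G act X m')"

end

theory Submission
  imports Defs
begin

text \<open>Along the ray \<open>s \<mapsto> s t\<^sub>0\<close> the variance is a quadratic polynomial
  \<open>F(s t\<^sub>0) = E\<parallel>X\<parallel>\<^sup>2 + s\<^sup>2\<parallel>t\<^sub>0\<parallel>\<^sup>2 - 2 s c\<close> with \<open>c = E max\<^sub>g \<langle>g\<cdot>X, t\<^sub>0\<rangle>\<close>, so its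
  minimiser on the ray is \<open>s = c / \<parallel>t\<^sub>0\<parallel>\<^sup>2\<close>. Since \<open>t\<^sub>0 = E X\<close> we have
  \<open>\<parallel>t\<^sub>0\<parallel>\<^sup>2 = E\<langle>X, t\<^sub>0\<rangle>\<close>, and \<open>\<langle>X, t\<^sub>0\<rangle> \<le> max\<^sub>g \<langle>g\<cdot>X, t\<^sub>0\<rangle>\<close> with strict inequality
  exactly when \<open>X \<notin> Cone(t\<^sub>0)\<close>. Hence \<open>c > \<parallel>t\<^sub>0\<parallel>\<^sup>2\<close>, the minimiser on the ray
  lies beyond \<open>t\<^sub>0\<close>, and \<open>t\<^sub>0\<close> is not even a minimiser along its own ray.\<close>

lemma norm_diff_power2:
  fixes a b :: "'a::real_inner"
  shows "(norm (a - b))\<^sup>2 = (norm a)\<^sup>2 - 2 * inner a b + (norm b)\<^sup>2"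
  by (simp add: power2_norm_eq_inner inner_diff_left inner_diff_right inner_commute)

lemma Min_diff_mult_image:
  fixes f :: "'g \<Rightarrow> real"
  assumes "finite C" "C \<noteq> {}" "d \<ge> 0"
  shows "Min ((\<lambda>g. K - d * f g) ` C) = K - d * Max (f ` C)"
proof (rule Min_eqI)
  show "finite ((\<lambda>g. K - d * f g) ` C)" using assms by simp
next
  fix y assume "y \<in> (\<lambda>g. K - d * f g) ` C"
  then obtain g where "g \<in> C" "y = K - d * f g" by auto
  moreover have "f g \<le> Max (f ` C)" using assms \<open>g \<in> C\<close> by simp
  ultimately show "K - d * Max (f ` C) \<le> y" using assms(3) by (simp add: mult_left_mono)
next
  have "Max (f ` C) \<in> f ` C" using assms by simp
  then show "K - d * Max (f ` C) \<in> (\<lambda>g. K - d * f g) ` C" by (metis image_image imageI)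
qed

lemma integrable_if_square_integrable_norm:
  fixes X :: "'w \<Rightarrow> 'a::euclidean_space"
  assumes "finite_measure M" "X \<in> borel_measurable M" "integrable M (\<lambda>w. (norm (X w))\<^sup>2)"
  shows "integrable M X"
proof -
  have "integrable M (\<lambda>w. norm (X w))"
    using finite_measure.square_integrable_imp_integrable[OF assms(1)
        measurable_compose[OF assms(2) borel_measurable_norm] assms(3)] .
  then show ?thesis using integrable_norm_iff[OF assms(2)] by blast
qed

lemma lin_iso_eff_action_orthogonal:
  assumes "lin_iso_eff_action G act" "g \<in> carrier G"
  shows "orthogonal_transformation (act g)"
  using assms unfolding lin_iso_eff_action_def orthogonal_transformation by blast

lemma lin_iso_eff_action_inner_inv:
  assumes "group G" "lin_iso_eff_action G act" "g \<in> carrier G"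
  shows "inner x (act g y) = inner (act (inv\<^bsub>G\<^esub> g) x) y"
proof -
  interpret group G by fact
  have "act g (act (inv\<^bsub>G\<^esub> g) x) = x"
    using assms(2,3) unfolding lin_iso_eff_action_def by (metis inv_closed r_inv)
  then have "inner x (act g y) = inner (act g (act (inv\<^bsub>G\<^esub> g) x)) (act g y)" by simp
  also have "\<dots> = inner (act (inv\<^bsub>G\<^esub> g) x) y"
    using lin_iso_eff_action_orthogonal[OF assms(2,3)] by (simp add: orthogonal_transformation_def)
  finally show ?thesis .
qed

lemma Cone_zero:
  assumes "lin_iso_eff_action G act"
  shows "Cone G act 0 = UNIV"
  using assms unfolding Cone_def lin_iso_eff_action_def by (auto simp: linear_0)

definition max_orbit_inner :: "('g, 'b) monoid_scheme \<Rightarrow> ('g \<Rightarrow> 'a::real_inner \<Rightarrow> 'a) \<Rightarrow> 'a \<Rightarrow> 'a \<Rightarrow> real" where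
  "max_orbit_inner G act t x = Max ((\<lambda>g. inner (act g x) t) ` carrier G)"

locale finite_lin_iso_eff_action = group G for G :: "('g, 'b) monoid_scheme" (structure) +
  fixes act :: "'g \<Rightarrow> 'a::euclidean_space \<Rightarrow> 'a"
  assumes finite: "finite (carrier G)" and action: "lin_iso_eff_action G act"
begin

lemma norm_act: "g \<in> carrier G \<Longrightarrow> norm (act g x) = norm x"
  using lin_iso_eff_action_orthogonal[OF action] orthogonal_transformation_norm by blast

lemma max_orbit_inner_attained:
  obtains g where "g \<in> carrier G" "max_orbit_inner G act t x = inner (act g x) t"
proof -
  have "max_orbit_inner G act t x \<in> (\<lambda>g. inner (act g x) t) ` carrier G"
    unfolding max_orbit_inner_def using finite one_closed by (intro Max_in) auto
  then show ?thesis using that by blast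
qed

lemma inner_le_max_orbit_inner:
  assumes "g \<in> carrier G"
  shows "inner (act g x) t \<le> max_orbit_inner G act t x"
  unfolding max_orbit_inner_def using finite assms by simp

lemma inner_le_max_orbit_inner_id: "inner x t \<le> max_orbit_inner G act t x"
  using inner_le_max_orbit_inner[OF one_closed, of x t] action
  by (simp add: lin_iso_eff_action_def)

lemma abs_max_orbit_inner_le: "\<bar>max_orbit_inner G act t x\<bar> \<le> norm x * norm t"
proof -
  obtain g where "g \<in> carrier G" "max_orbit_inner G act t x = inner (act g x) t"
    by (rule max_orbit_inner_attained)
  then show ?thesis
    using Cauchy_Schwarz_ineq2[of "act g x" t] norm_act by simp
qed

text \<open>Outside the cone, some point \<open>g \<cdot> t\<close> of the orbit of \<open>t\<close> is closer to
  \<open>x\<close> than \<open>t\<close>, i.e. \<open>\<langle>x, t\<rangle> < \<langle>x, g \<cdot> t\<rangle> = \<langle>g\<^sup>-\<^sup>1 \<cdot> x, t\<rangle>\<close>.\<close>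
lemma inner_less_max_orbit_inner_if_notin_Cone:
  assumes "x \<notin> Cone G act t"
  shows "inner x t < max_orbit_inner G act t x"
proof -
  obtain g where g: "g \<in> carrier G" "norm (x - act g t) < norm (x - t)"
    using assms unfolding Cone_def by (auto simp: not_le)
  from g(2) have "(norm (x - act g t))\<^sup>2 < (norm (x - t))\<^sup>2"
    by (simp add: power_strict_mono)
  then have "inner x t < inner x (act g t)"
    by (simp add: norm_diff_power2 norm_act[OF g(1)])
  also have "\<dots> = inner (act (inv g) x) t"
    by (rule lin_iso_eff_action_inner_inv[OF is_group action g(1)])
  also have "\<dots> \<le> max_orbit_inner G act t x"
    using g(1) by (intro inner_le_max_orbit_inner) simp
  finally show ?thesis .
qed

lemma Min_orbit_dist_ray:
  assumes "s \<ge> 0"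
  shows "Min ((\<lambda>g. (norm (act g x - s *\<^sub>R t))\<^sup>2) ` carrier G)
           = (norm x)\<^sup>2 + s\<^sup>2 * (norm t)\<^sup>2 - 2 * s * max_orbit_inner G act t x"
proof -
  have "(\<lambda>g. (norm (act g x - s *\<^sub>R t))\<^sup>2) ` carrier G
      = (\<lambda>g. ((norm x)\<^sup>2 + s\<^sup>2 * (norm t)\<^sup>2) - (2 * s) * inner (act g x) t) ` carrier G"
  proof (rule image_cong[OF refl])
    fix g assume "g \<in> carrier G"
    then show "(norm (act g x - s *\<^sub>R t))\<^sup>2
               = ((norm x)\<^sup>2 + s\<^sup>2 * (norm t)\<^sup>2) - (2 * s) * inner (act g x) t"
      by (simp add: norm_diff_power2 power_mult_distrib norm_act)
  qed
  moreover have "carrier G \<noteq> {}" using one_closed by blast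
  ultimately show ?thesis
    using Min_diff_mult_image[OF finite _ _, where f = "\<lambda>g. inner (act g x) t" and d = "2 * s"] assms
    unfolding max_orbit_inner_def by simp
qed

context
  fixes M :: "'w measure" and X :: "'w \<Rightarrow> 'a"
  assumes prob: "prob_space M" and X_meas: "X \<in> borel_measurable M"
    and X_sq_int: "integrable M (\<lambda>w. (norm (X w))\<^sup>2)"
begin

lemma integrable_X: "integrable M X"
  using integrable_if_square_integrable_norm[OF prob_space.finite_measure[OF prob] X_meas X_sq_int] .

lemma integrable_max_orbit_inner: "integrable M (\<lambda>w. max_orbit_inner G act t (X w))"
proof (rule Bochner_Integration.integrable_bound)
  show "integrable M (\<lambda>w. norm t * norm (X w))"
    using integrable_X by simp
  have "(\<lambda>w. act g (X w)) \<in> borel_measurable M" if "g \<in> carrier G" for g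
  proof -
    have "bounded_linear (act g)"
      using lin_iso_eff_action_orthogonal[OF action that]
      by (simp add: orthogonal_transformation_linear linear_conv_bounded_linear[symmetric])
    then show ?thesis
      by (intro measurable_compose[OF X_meas] borel_measurable_continuous_onI linear_continuous_on)
  qed
  then show "(\<lambda>w. max_orbit_inner G act t (X w)) \<in> borel_measurable M"
    unfolding max_orbit_inner_def by (intro borel_measurable_Max finite) auto
  show "AE w in M. norm (max_orbit_inner G act t (X w)) \<le> norm (norm t * norm (X w))"
    using abs_max_orbit_inner_le by (simp add: mult.commute)
qed

lemma orbit_variance_ray:
  assumes "s \<ge> 0"
  shows "orbit_variance M G act X (s *\<^sub>R t)
           = (\<integral>w. (norm (X w))\<^sup>2 \<partial>M) + s\<^sup>2 * (norm t)\<^sup>2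
             - 2 * s * (\<integral>w. max_orbit_inner G act t (X w) \<partial>M)"
proof -
  interpret P: prob_space M by (rule prob)
  have "orbit_variance M G act X (s *\<^sub>R t)
      = (\<integral>w. (norm (X w))\<^sup>2 + s\<^sup>2 * (norm t)\<^sup>2 - 2 * s * max_orbit_inner G act t (X w) \<partial>M)"
    unfolding orbit_variance_def Min_orbit_dist_ray[OF assms] ..
  also have "\<dots> = (\<integral>w. (norm (X w))\<^sup>2 \<partial>M) + s\<^sup>2 * (norm t)\<^sup>2
                   - 2 * s * (\<integral>w. max_orbit_inner G act t (X w) \<partial>M)"
    using X_sq_int integrable_max_orbit_inner by (simp add: P.prob_space)
  finally show ?thesis .
qed

lemma norm_mean_less_integral_max_orbit_inner:
  assumes "t = (\<integral>w. X w \<partial>M)"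
    and "measure M {w \<in> space M. X w \<notin> Cone G act t} > 0"
  shows "(norm t)\<^sup>2 < (\<integral>w. max_orbit_inner G act t (X w) \<partial>M)"
proof -
  let ?A = "{w \<in> space M. X w \<notin> Cone G act t}"
  have "(norm t)\<^sup>2 = (\<integral>w. inner (X w) t \<partial>M)"
    using integrable_X assms(1) by (simp add: power2_norm_eq_inner)
  also have "\<dots> < (\<integral>w. max_orbit_inner G act t (X w) \<partial>M)"
  proof (rule finite_measure.integral_less_AE[where A = ?A])
    show "finite_measure M" using prob by (simp add: prob_space.finite_measure)
    show "integrable M (\<lambda>w. inner (X w) t)" using integrable_X by simp
    show "integrable M (\<lambda>w. max_orbit_inner G act t (X w))" by (rule integrable_max_orbit_inner)
    show "?A \<in> sets M" using assms(2) measure_notin_sets by fastforce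
    show "emeasure M ?A \<noteq> 0" using assms(2) by (metis less_irrefl measure_def enn2real_0)
    show "AE w\<in>?A in M. inner (X w) t \<noteq> max_orbit_inner G act t (X w)"
      using inner_less_max_orbit_inner_if_notin_Cone by (auto intro!: AE_I2 less_imp_neq)
    show "AE w in M. inner (X w) t \<le> max_orbit_inner G act t (X w)"
      using inner_le_max_orbit_inner_id by simp
  qed
  finally show ?thesis .
qed

end

end

text \<open>The minimiser \<open>s = c / b\<close> of \<open>A + s\<^sup>2 b - 2 s c\<close> beats \<open>s = 1\<close> by \<open>(c - b)\<^sup>2 / b\<close>.\<close>
lemma quadratic_vertex_less:
  fixes A b c :: real
  assumes "b > 0" "c \<noteq> b"
  shows "A + (c / b)\<^sup>2 * b - 2 * (c / b) * c < A + b - 2 * c"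
proof -
  have "A + b - 2 * c - (A + (c / b)\<^sup>2 * b - 2 * (c / b) * c) = (c - b)\<^sup>2 / b"
    using assms(1) by (simp add: field_simps power2_eq_square)
  moreover have "(c - b)\<^sup>2 / b > 0" using assms by simp
  ultimately show ?thesis by linarith
qed

theorem mainTheorem1:
  fixes G :: "('g, 'b) monoid_scheme"
    and act :: "'g \<Rightarrow> 'a::euclidean_space \<Rightarrow> 'a"
    and M :: "'w measure"
    and X :: "'w \<Rightarrow> 'a"
  assumes "group G" and "finite (carrier G)"
    and "lin_iso_eff_action G act"
    and "prob_space M"
    and "X \<in> borel_measurable M"
    and "absolutely_continuous lborel (distr M lborel X)"
    and "integrable M (\<lambda>w. (norm (X w))\<^sup>2)"
    and "t0 = (\<integral>w. X w \<partial>M)"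
    and "regular_point G act t0"
    and "measure M {w \<in> space M. X w \<notin> Cone G act t0} > 0"
  shows "\<not> is_frechet_mean M G act X t0"
proof -
  interpret finite_lin_iso_eff_action G act using assms(1-3)
    by (simp add: finite_lin_iso_eff_action_def finite_lin_iso_eff_action_axioms_def)
  define b where "b = (norm t0)\<^sup>2"
  define c where "c = (\<integral>w. max_orbit_inner G act t0 (X w) \<partial>M)"
  have "t0 \<noteq> 0" using assms(10) Cone_zero[OF assms(3)] by auto
  then have "b > 0" by (simp add: b_def)
  have "b < c"
    using norm_mean_less_integral_max_orbit_inner[OF assms(4,5,7) assms(8,10)]
    by (simp add: b_def c_def)
  have variance: "orbit_variance M G act X (s *\<^sub>R t0) = (\<integral>w. (norm (X w))\<^sup>2 \<partial>M) + s\<^sup>2 * b - 2 * s * c"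
    if "s \<ge> 0" for s
    using orbit_variance_ray[OF assms(4,5,7) that] by (simp add: b_def c_def)
  have "orbit_variance M G act X ((c / b) *\<^sub>R t0) < orbit_variance M G act X (1 *\<^sub>R t0)"
    using variance[of "c / b"] variance[of 1] quadratic_vertex_less[OF \<open>b > 0\<close>] \<open>b > 0\<close> \<open>b < c\<close>
    by simp
  then show ?thesis unfolding is_frechet_mean_def by (auto simp: not_le)
qed

end
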